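(* Let $(K,\mathrm{val})$ be a $2$-henselian valued field whose residue class field $F$ has characteristic $\neq2$, let $A$ be a subring with $B\subseteq A\subseteq K$, let $g\in G$, and let $M$ be a proper quasi-quadratic module in $F$ (i.e. $M\ne F$). Then $\Phi^A(M,[\![g]\!])$ is a quasi-quadratic module in $A$.
   Context: Let $(G,\le)$ be a totally ordered abelian group written multiplicatively with identity $e$; $G_{\ge e}=\{g\in G:g\ge e\}$, $G^2=\{g^2:g\in G\}$. Let $(K,\mathrm{val})$ be a valued field with surjective valuation $\mathrm{val}:K\to G\cup\{\infty\}$, valuation ring $B=\{x:\mathrm{val}(x)\ge e\}$, residue map $\pi:B\to F$, residue field $F$. A strict unit is $x\in B^\times$ with $\pi(x)=1$; when $\mathrm{char}F\ne2$, $2$-henselian is equivalent to every strict unit being a square in $K$. For a subring $A$ with $B\subseteq A\subseteq K$ put $H=\mathrm{val}(A^\times)$; $H$ is a convex subgroup of $G$ and $\mathrm{val}(A\setminus\{0\})=H\cup G_{\ge e}$. For $g\in G$: $\overline g$ is its class in $G/G^2$, $[\![g]\!]$ its class in $G/H^2$, $[g]$ its class in $G/H$; "$\mathrm{val}(x)=\overline g$" means $\overline{\mathrm{val}(x)}=\overline g$, and similarly for $[\![\cdot]\!]$ and $[\cdot]$. A quasi-quadratic module in a commutative ring $R$ is a subset $M\subseteq R$ with $M+M\subseteq M$ and $a^2M\subseteq M$ for all $a\in R$. A pseudo-angular component map is a map $\mathrm{p.an}:K^\times\to F^\times$ such that: (1) $\mathrm{p.an}(u)=\pi(u)$ for $u\in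 B^\times$; (2) $\mathrm{p.an}(ux)=\pi(u)\mathrm{p.an}(x)$ for $u\in B^\times,x\in K^\times$; (3) for all $g\in G$, $c\in F^\times$ there is $w\in K$ with $\mathrm{val}(w)=g$, $\mathrm{p.an}(w)=c$; (4) for nonzero $x_1,x_2$ with $x_1+x_2\ne0$: if $\mathrm{val}(x_1)<\mathrm{val}(x_2)$ then $\mathrm{p.an}(x_1+x_2)=\mathrm{p.an}(x_1)$; if $\mathrm{val}(x_1)=\mathrm{val}(x_2)$ and $\mathrm{p.an}(x_1)+\mathrm{p.an}(x_2)\ne0$ then $\mathrm{val}(x_1+x_2)=\mathrm{val}(x_1)$ and $\mathrm{p.an}(x_1+x_2)=\mathrm{p.an}(x_1)+\mathrm{p.an}(x_2)$; (5) if $x,y\in K^\times$, $\overline{\mathrm{val}(x)}=\overline{\mathrm{val}(y)}$ and $\mathrm{p.an}(x)=\mathrm{p.an}(y)$ then $y=u^2x$ for some $u\in K^\times$; (6) for $a,u\in K^\times$ there is $k\in F^\times$ with $\mathrm{p.an}(au^2)=\mathrm{p.an}(a)k^2$. Such a map exists under the hypotheses; fix one. For $g\in G$ and a quasi-quadratic module $M$ in $F$: $$\Phi^A(M,[\![g]\!])=\{x\in A\setminus\{0\}:\ \mathrm{val}(x)=\overline g,\ (\mathrm{val}(x)=[\![g]\!]\ \text{or}\ \mathrm{val}(x)>g),\ \mathrm{p.an}(x)\in M\}\cup\{0\}$$ (this depends only on $[\![g]\!]$). *)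

theory Defs
  imports Main
begin

text \<open>The value group G is written additively: identity 0, G_{>=e} = {g. g >= 0},
  G^2 = {g + g}. The value of 0 (infinity) is never used: all statements about
  val are restricted to nonzero elements.\<close>

definition valuation :: "('k::field \<Rightarrow> 'g::linordered_ab_group_add) \<Rightarrow> bool" where
  "valuation val \<longleftrightarrow>
     (\<forall>x y. x \<noteq> 0 \<longrightarrow> y \<noteq> 0 \<longrightarrow> val (x * y) = val x + val y) \<and>
     (\<forall>x y. x \<noteq> 0 \<longrightarrow> y \<noteq> 0 \<longrightarrow> x + y \<noteq> 0 \<longrightarrow> min (val x) (val y) \<le> val (x + y)) \<and>
     (\<forall>g. \<exists>x. x \<noteq> 0 \<and> val x = g)"

definition val_ring :: "('k::field \<Rightarrow> 'g::linordered_ab_group_add) \<Rightarrow> 'k set" where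
  "val_ring val = {x. x = 0 \<or> val x \<ge> 0}"

definition val_units :: "('k::field \<Rightarrow> 'g::linordered_ab_group_add) \<Rightarrow> 'k set" where
  "val_units val = {x. x \<noteq> 0 \<and> val x = 0}"

definition residue_map ::
  "('k::field \<Rightarrow> 'g::linordered_ab_group_add) \<Rightarrow> ('k \<Rightarrow> 'f::field) \<Rightarrow> bool" where
  "residue_map val \<pi> \<longleftrightarrow>
     (\<forall>x\<in>val_ring val. \<forall>y\<in>val_ring val. \<pi> (x + y) = \<pi> x + \<pi> y \<and> \<pi> (x * y) = \<pi> x * \<pi> y) \<and>
     \<pi> 1 = 1 \<and>
     (\<forall>c. \<exists>x\<in>val_ring val. \<pi> x = c) \<and>
     (\<forall>x\<in>val_ring val. \<pi> x = 0 \<longleftrightarrow> (x = 0 \<or> val x > 0))"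

definition strict_unit :: "('k::field \<Rightarrow> 'g::linordered_ab_group_add) \<Rightarrow> ('k \<Rightarrow> 'f::field) \<Rightarrow> 'k \<Rightarrow> bool" where
  "strict_unit val \<pi> x \<longleftrightarrow> x \<in> val_units val \<and> \<pi> x = 1"

text \<open>2-henselian (in residue characteristic not 2): every strict unit is a square.\<close>
definition two_henselian :: "('k::field \<Rightarrow> 'g::linordered_ab_group_add) \<Rightarrow> ('k \<Rightarrow> 'f::field) \<Rightarrow> bool" where
  "two_henselian val \<pi> \<longleftrightarrow> (\<forall>x. strict_unit val \<pi> x \<longrightarrow> (\<exists>y. x = y ^ 2))"

definition subring :: "'k::comm_ring_1 set \<Rightarrow> bool" where
  "subring A \<longleftrightarrow> 1 \<in> A \<and> (\<forall>x\<in>A. \<forall>y\<in>A. x + y \<in> A \<and> x * y \<in> A \<and> - x \<in> A)"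

definition ring_units :: "'k::field set \<Rightarrow> 'k set" where
  "ring_units A = {x\<in>A. x \<noteq> 0 \<and> inverse x \<in> A}"

definition squares_grp :: "'g::ab_group_add set \<Rightarrow> 'g set" where
  "squares_grp S = {h + h | h. h \<in> S}"

definition pseudo_angular ::
  "('k::field \<Rightarrow> 'g::linordered_ab_group_add) \<Rightarrow> ('k \<Rightarrow> 'f::field) \<Rightarrow> ('k \<Rightarrow> 'f) \<Rightarrow> bool" where
  "pseudo_angular val \<pi> pan \<longleftrightarrow>
     (\<forall>x. x \<noteq> 0 \<longrightarrow> pan x \<noteq> 0) \<and>
     (\<forall>u\<in>val_units val. pan u = \<pi> u) \<and>
     (\<forall>u\<in>val_units val. \<forall>x. x \<noteq> 0 \<longrightarrow> pan (u * x) = \<pi> u * pan x) \<and>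
     (\<forall>g c. c \<noteq> 0 \<longrightarrow> (\<exists>w. w \<noteq> 0 \<and> val w = g \<and> pan w = c)) \<and>
     (\<forall>x1 x2. x1 \<noteq> 0 \<longrightarrow> x2 \<noteq> 0 \<longrightarrow> x1 + x2 \<noteq> 0 \<longrightarrow>
        (val x1 < val x2 \<longrightarrow> pan (x1 + x2) = pan x1) \<and>
        (val x1 = val x2 \<longrightarrow> pan x1 + pan x2 \<noteq> 0 \<longrightarrow>
           val (x1 + x2) = val x1 \<and> pan (x1 + x2) = pan x1 + pan x2)) \<and>
     (\<forall>x y. x \<noteq> 0 \<longrightarrow> y \<noteq> 0 \<longrightarrow> val x - val y \<in> squares_grp UNIV \<longrightarrow> pan x = pan y \<longrightarrow>
        (\<exists>u. u \<noteq> 0 \<and> y = u ^ 2 * x)) \<and>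
     (\<forall>a u. a \<noteq> 0 \<longrightarrow> u \<noteq> 0 \<longrightarrow> (\<exists>k. k \<noteq> 0 \<and> pan (a * u ^ 2) = pan a * k ^ 2))"

definition quasi_quadratic_module :: "'a::comm_ring_1 set \<Rightarrow> 'a set \<Rightarrow> bool" where
  "quasi_quadratic_module R M \<longleftrightarrow> M \<subseteq> R \<and>
     (\<forall>x\<in>M. \<forall>y\<in>M. x + y \<in> M) \<and> (\<forall>a\<in>R. \<forall>x\<in>M. a ^ 2 * x \<in> M)"

definition Phi ::
  "('k::field \<Rightarrow> 'g::linordered_ab_group_add) \<Rightarrow> ('k \<Rightarrow> 'f::field) \<Rightarrow> 'k set \<Rightarrow> 'f set \<Rightarrow> 'g \<Rightarrow> 'k set" where
  "Phi val pan A M g =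
     {x\<in>A. x \<noteq> 0 \<and> val x - g \<in> squares_grp UNIV \<and>
        (val x - g \<in> squares_grp (val ` ring_units A) \<or> val x > g) \<and> pan x \<in> M} \<union> {0}"

end

theory Submission
  imports Defs
begin

text \<open>With \<open>H = val(A\<^sup>\<times>)\<close>, a nonzero \<open>x\<close> lies in \<open>\<Phi>\<close> iff \<open>val x - g = k + k\<close> with
  \<open>k \<in> H \<union> G\<^sub>>\<^sub>0\<close> and \<open>pan x \<in> M\<close>. Multiplying by \<open>a\<^sup>2\<close>, \<open>a \<in> A\<close>, shifts \<open>k\<close> by \<open>val a\<close>,
  and \<open>H \<union> G\<^sub>>\<^sub>0\<close> is stable under such shifts because \<open>H\<close> is convex; \<open>pan\<close> changes
  by a square factor, which \<open>M\<close> absorbs. For a sum, the summand of smaller value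
  dictates value and \<open>pan\<close>; for equal values the \<open>pan\<close>'s add, and they cannot cancel
  because a proper quasi-quadratic module contains no pair \<open>c, -c\<close> with \<open>c \<noteq> 0\<close>.\<close>

lemma valuation_mult:
  assumes "valuation val" "x \<noteq> 0" "y \<noteq> 0"
  shows "val (x * y) = val x + val y"
  using assms unfolding valuation_def by blast

lemma valuation_one:
  assumes "valuation val"
  shows "val (1::'k::field) = (0::'g::linordered_ab_group_add)"
  using valuation_mult[OF assms, of 1 1] by simp

lemma valuation_minus:
  fixes val :: "'k::field \<Rightarrow> 'g::linordered_ab_group_add"
  assumes "valuation val" "x \<noteq> 0"
  shows "val (- x) = val x"
proof -
  have "val (-1) + val (-1) = val (1::'k)"
    using valuation_mult[OF assms(1), of "-1" "-1"] by simp
  then have "val (-1::'k) = 0"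
    using valuation_one[OF assms(1)] by simp
  then show ?thesis
    using valuation_mult[OF assms(1), of "-1" x] assms(2) by simp
qed

lemma valuation_inverse:
  fixes val :: "'k::field \<Rightarrow> 'g::linordered_ab_group_add"
  assumes "valuation val" "x \<noteq> 0"
  shows "val (inverse x) = - val x"
  using valuation_mult[OF assms(1), of x "inverse x"] valuation_one[OF assms(1)] assms(2)
  by (simp add: eq_neg_iff_add_eq_0 add.commute)

lemma valuation_add_less:
  fixes val :: "'k::field \<Rightarrow> 'g::linordered_ab_group_add"
  assumes "valuation val" "x \<noteq> 0" "y \<noteq> 0" "val x < val y"
  shows "x + y \<noteq> 0" and "val (x + y) = val x"
proof -
  have ultra: "min (val u) (val v) \<le> val (u + v)" if "u \<noteq> 0" "v \<noteq> 0" "u + v \<noteq> 0" for u v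
    using assms(1) that unfolding valuation_def by blast
  show sum_nz: "x + y \<noteq> 0"
  proof
    assume "x + y = 0"
    then have "x = - y"
      by (simp add: eq_neg_iff_add_eq_0)
    then show False
      using valuation_minus[OF assms(1,3)] assms(4) by simp
  qed
  have "val x \<le> val (x + y)"
    using ultra[OF assms(2,3) sum_nz] assms(4) by simp
  moreover have "min (val (x + y)) (val y) \<le> val x"
    using ultra[OF sum_nz, of "- y"] assms(2,3) valuation_minus[OF assms(1,3)] by simp
  ultimately show "val (x + y) = val x"
    using assms(4) by (auto simp: min_def split: if_splits)
qed

lemma subring_zero_mem: "subring A \<Longrightarrow> 0 \<in> A"
  unfolding subring_def by (metis add.right_inverse)

lemma pseudo_angular_nonzero:
  "pseudo_angular val \<pi> pan \<Longrightarrow> x \<noteq> 0 \<Longrightarrow> pan x \<noteq> 0"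
  unfolding pseudo_angular_def by blast

lemma pseudo_angular_add_less:
  "pseudo_angular val \<pi> pan \<Longrightarrow> x \<noteq> 0 \<Longrightarrow> y \<noteq> 0 \<Longrightarrow> x + y \<noteq> 0 \<Longrightarrow> val x < val y
    \<Longrightarrow> pan (x + y) = pan x"
  unfolding pseudo_angular_def by blast

lemma pseudo_angular_add_eq:
  "pseudo_angular val \<pi> pan \<Longrightarrow> x \<noteq> 0 \<Longrightarrow> y \<noteq> 0 \<Longrightarrow> x + y \<noteq> 0 \<Longrightarrow> val x = val y
    \<Longrightarrow> pan x + pan y \<noteq> 0 \<Longrightarrow> val (x + y) = val x \<and> pan (x + y) = pan x + pan y"
  unfolding pseudo_angular_def by blast

lemma pseudo_angular_mult_square:
  "pseudo_angular val \<pi> pan \<Longrightarrow> a \<noteq> 0 \<Longrightarrow> u \<noteq> 0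
    \<Longrightarrow> \<exists>k. k \<noteq> 0 \<and> pan (a * u ^ 2) = pan a * k ^ 2"
  unfolding pseudo_angular_def by blast

lemma ring_units_of_val_nonpos:
  fixes val :: "'k::field \<Rightarrow> 'g::linordered_ab_group_add"
  assumes "valuation val" "val_ring val \<subseteq> A" "z \<in> A" "z \<noteq> 0" "val z \<le> 0"
  shows "z \<in> ring_units A"
proof -
  have "inverse z \<in> val_ring val"
    using valuation_inverse[OF assms(1,4)] assms(5) unfolding val_ring_def by simp
  then show ?thesis
    using assms(2-4) unfolding ring_units_def by auto
qed

text \<open>Convexity of \<open>H = val(A\<^sup>\<times>)\<close>: the witness is \<open>a w\<close> with \<open>w \<in> B\<close> of value \<open>d - val a\<close>.\<close>

lemma val_ring_units_convex:
  fixes val :: "'k::field \<Rightarrow> 'g::linordered_ab_group_add"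
  assumes "valuation val" "subring A" "val_ring val \<subseteq> A"
    and "a \<in> A" "a \<noteq> 0" "val a \<le> d" "d \<le> 0"
  shows "d \<in> val ` ring_units A"
proof -
  obtain w where w: "w \<noteq> 0" "val w = d - val a"
    using assms(1) unfolding valuation_def by metis
  have "w \<in> A"
    using w assms(3,6) unfolding val_ring_def by auto
  then have "a * w \<in> A"
    using assms(2,4) unfolding subring_def by blast
  moreover have val_aw: "val (a * w) = d"
    using valuation_mult[OF assms(1,5) w(1)] w(2) by simp
  ultimately have "a * w \<in> ring_units A"
    using ring_units_of_val_nonpos[OF assms(1,3)] assms(5,7) w(1) by simp
  then show ?thesis
    using val_aw by force
qed

text \<open>A proper quasi-quadratic module over a field of characteristic \<open>\<noteq> 2\<close> meets its
  negative only in 0: otherwise \<open>z = s\<^sup>2 c + t\<^sup>2 (-c)\<close> with \<open>s, t = (1 \<plusminus> z/c)/2\<close> for every \<open>z\<close>.\<close>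

lemma proper_quasi_quadratic_module_support:
  fixes M :: "'f::field set"
  assumes "quasi_quadratic_module UNIV M" "M \<noteq> UNIV" "(2::'f) \<noteq> 0"
    and "c \<in> M" "- c \<in> M"
  shows "c = 0"
proof (rule ccontr)
  assume "c \<noteq> 0"
  have "z \<in> M" for z
  proof -
    define s where "s = (1 + z / c) / 2"
    define t where "t = (1 - z / c) / 2"
    have st: "s + t = 1" "s - t = z / c"
      using assms(3) unfolding s_def t_def
      by (simp_all add: add_divide_distrib[symmetric] diff_divide_distrib[symmetric])
    have "s ^ 2 * c + t ^ 2 * (- c) = c * ((s + t) * (s - t))"
      by (simp add: power2_eq_square algebra_simps)
    also have "\<dots> = z"
      using st \<open>c \<noteq> 0\<close> by simp
    finally have "s ^ 2 * c + t ^ 2 * (- c) = z" .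
    moreover have "s ^ 2 * c + t ^ 2 * (- c) \<in> M"
      using assms(1,4,5) unfolding quasi_quadratic_module_def by blast
    ultimately show ?thesis
      by simp
  qed
  then show False
    using assms(2) by auto
qed

definition admissible_value ::
  "('k::field \<Rightarrow> 'g::linordered_ab_group_add) \<Rightarrow> 'k set \<Rightarrow> 'g \<Rightarrow> 'g \<Rightarrow> bool" where
  "admissible_value val A g v \<longleftrightarrow> v - g \<in> squares_grp UNIV \<and>
     (v - g \<in> squares_grp (val ` ring_units A) \<or> v > g)"

lemma Phi_subset: "subring A \<Longrightarrow> Phi val pan A M g \<subseteq> A"
  unfolding Phi_def using subring_zero_mem by blast

lemma Phi_iff:
  "x \<in> Phi val pan A M g \<longleftrightarrow>
     x = 0 \<or> (x \<in> A \<and> x \<noteq> 0 \<and> admissible_value val A g (val x) \<and> pan x \<in> M)"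
  unfolding Phi_def admissible_value_def by blast

lemma admissible_value_iff:
  "admissible_value val A g v \<longleftrightarrow> (\<exists>k. v - g = k + k \<and> (k \<in> val ` ring_units A \<or> 0 < k))"
proof
  assume adm: "admissible_value val A g v"
  obtain k where k: "v - g = k + k"
    using adm unfolding admissible_value_def squares_grp_def by blast
  show "\<exists>k. v - g = k + k \<and> (k \<in> val ` ring_units A \<or> 0 < k)"
  proof (cases "v - g \<in> squares_grp (val ` ring_units A)")
    case True
    then show ?thesis
      unfolding squares_grp_def by blast
  next
    case False
    then have "0 < k + k"
      using adm k unfolding admissible_value_def by (metis diff_gt_0_iff_gt)
    then show ?thesis
      using k by auto
  qed
next
  assume "\<exists>k. v - g = k + k \<and> (k \<in> val ` ring_units A \<or> 0 < k)"
  then obtain k where k: "v - g = k + k" "k \<in> val ` ring_units A \<or> 0 < k"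
    by blast
  have "v - g \<in> squares_grp (val ` ring_units A) \<or> g < v"
  proof (cases "0 < k")
    case True
    then have "0 < v - g"
      using k(1) by simp
    then show ?thesis
      by simp
  next
    case False
    then show ?thesis
      using k unfolding squares_grp_def by blast
  qed
  then show "admissible_value val A g v"
    using k(1) unfolding admissible_value_def squares_grp_def by blast
qed

lemma units_val_or_pos_add_val:
  fixes val :: "'k::field \<Rightarrow> 'g::linordered_ab_group_add"
  assumes "valuation val" "subring A" "val_ring val \<subseteq> A"
    and "k \<in> val ` ring_units A \<or> 0 < k" "a \<in> A" "a \<noteq> 0"
  shows "k + val a \<in> val ` ring_units A \<or> 0 < k + val a"
proof (cases "0 < k + val a")
  case False
  have "\<exists>c\<in>A. c \<noteq> 0 \<and> val c \<le> k + val a"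
  proof (cases "0 < k")
    case True
    then have "val a \<le> k + val a"
      by (simp add: less_imp_le)
    then show ?thesis
      using assms(5,6) by blast
  next
    case False
    then obtain u where u: "u \<in> A" "u \<noteq> 0" "val u = k"
      using assms(4) unfolding ring_units_def by blast
    have "u * a \<in> A"
      using assms(2,5) u(1) unfolding subring_def by blast
    moreover have "val (u * a) = k + val a"
      using valuation_mult[OF assms(1) u(2) assms(6)] u(3) by simp
    ultimately show ?thesis
      using u(2) assms(6) by (metis mult_eq_0_iff order_refl)
  qed
  then obtain c where c: "c \<in> A" "c \<noteq> 0" "val c \<le> k + val a"
    by blast
  have "k + val a \<le> 0"
    using False by (rule leI)
  then show ?thesis
    using val_ring_units_convex[OF assms(1-3) c] by blast
qed (rule disjI2)

context
  fixes val :: "'k::field \<Rightarrow> 'g::linordered_ab_group_add"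
    and \<pi> :: "'k \<Rightarrow> 'f::field" and pan :: "'k \<Rightarrow> 'f"
    and A :: "'k set" and M :: "'f set"
  assumes val: "valuation val"
    and pan: "pseudo_angular val \<pi> pan"
    and A: "subring A" "val_ring val \<subseteq> A"
    and M: "quasi_quadratic_module UNIV M"
begin

lemma Phi_add_val_less:
  assumes "x \<in> Phi val pan A M g" "x \<noteq> 0" "y \<noteq> 0" "x + y \<in> A" "val x < val y"
  shows "x + y \<in> Phi val pan A M g"
  using assms valuation_add_less[OF val assms(2,3,5)]
    pseudo_angular_add_less[OF pan assms(2,3) _ assms(5)]
  unfolding Phi_iff by auto

lemma Phi_add:
  assumes "M \<noteq> UNIV" "(2::'f) \<noteq> 0"
    and x: "x \<in> Phi val pan A M g" and y: "y \<in> Phi val pan A M g"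
  shows "x + y \<in> Phi val pan A M g"
proof (cases "x = 0 \<or> y = 0 \<or> x + y = 0")
  case False
  then have nz: "x \<noteq> 0" "y \<noteq> 0" "x + y \<noteq> 0"
    by auto
  have "x + y \<in> A"
    using x y Phi_subset[OF A(1)] A(1) unfolding subring_def by blast
  consider "val x < val y" | "val y < val x" | "val x = val y"
    by fastforce
  then show ?thesis
  proof cases
    case 1
    then show ?thesis
      using Phi_add_val_less[OF x nz(1,2) \<open>x + y \<in> A\<close>] by blast
  next
    case 2
    then show ?thesis
      using Phi_add_val_less[OF y nz(2,1)] \<open>x + y \<in> A\<close> by (simp add: add.commute)
  next
    case 3
    have "pan x \<in> M" "pan y \<in> M"
      using x y nz unfolding Phi_iff by auto
    then have "pan x + pan y \<noteq> 0"
      using proper_quasi_quadratic_module_support[OF M assms(1,2), of "pan x"]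
        pseudo_angular_nonzero[OF pan nz(1)] by (auto simp: minus_unique)
    moreover have "pan x + pan y \<in> M"
      using \<open>pan x \<in> M\<close> \<open>pan y \<in> M\<close> M unfolding quasi_quadratic_module_def by blast
    ultimately show ?thesis
      using pseudo_angular_add_eq[OF pan nz 3] x \<open>x + y \<in> A\<close> nz unfolding Phi_iff by auto
  qed
qed (use x y in \<open>auto simp: Phi_iff\<close>)

lemma Phi_square_mult:
  assumes "a \<in> A" "x \<in> Phi val pan A M g"
  shows "a ^ 2 * x \<in> Phi val pan A M g"
proof (cases "a = 0 \<or> x = 0")
  case False
  then have nz: "a \<noteq> 0" "x \<noteq> 0"
    by auto
  have x: "x \<in> A" "admissible_value val A g (val x)" "pan x \<in> M"
    using assms(2) nz unfolding Phi_iff by auto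
  have "a ^ 2 * x \<in> A"
    using A(1) assms(1) x(1) unfolding subring_def power2_eq_square by blast
  moreover obtain k where k: "val x - g = k + k" "k \<in> val ` ring_units A \<or> 0 < k"
    using x(2) unfolding admissible_value_iff by blast
  have "val (a ^ 2 * x) - g = (k + val a) + (k + val a)"
    using k(1) valuation_mult[OF val] nz by (simp add: power2_eq_square algebra_simps)
  then have "admissible_value val A g (val (a ^ 2 * x))"
    using units_val_or_pos_add_val[OF val A k(2) assms(1) nz(1)]
    unfolding admissible_value_iff by blast
  moreover obtain c where "pan (x * a ^ 2) = pan x * c ^ 2"
    using pseudo_angular_mult_square[OF pan nz(2,1)] by blast
  then have "pan (a ^ 2 * x) \<in> M"
    using x(3) M unfolding quasi_quadratic_module_def by (simp add: mult.commute)
  ultimately show ?thesis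
    using nz unfolding Phi_iff by simp
qed (use assms(2) in \<open>auto simp: Phi_iff\<close>)

end

theorem mainTheorem4:
  fixes val :: "'k::field \<Rightarrow> 'g::linordered_ab_group_add"
    and \<pi> :: "'k \<Rightarrow> 'f::field"
    and pan :: "'k \<Rightarrow> 'f"
    and A :: "'k set" and M :: "'f set" and g :: 'g
  assumes "valuation val"
    and "residue_map val \<pi>"
    and "(2::'f) \<noteq> 0"
    and "two_henselian val \<pi>"
    and "pseudo_angular val \<pi> pan"
    and "subring A" and "val_ring val \<subseteq> A"
    and "quasi_quadratic_module (UNIV :: 'f set) M" and "M \<noteq> UNIV"
  shows "quasi_quadratic_module A (Phi val pan A M g)"
  unfolding quasi_quadratic_module_def
  using Phi_subset[OF assms(6)] Phi_add[OF assms(1,5-9,3)] Phi_square_mult[OF assms(1,5-8)]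
  by blast

end
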